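(* Let $n\ge1$ and let $P_4(x,y;n)$ be the polynomial defined below. If $u,v$ are nonnegative integers with $u+v\le n-1$, then $P_4(-u,-v;n)=0$.
   Context: $E(x,y;n):=\det_{0\le i,j\le n-1}\left(\frac{(x+y+i+j-1)!\,(y-x+3j-3i)}{(x+2i-j+1)!\,(y+2j-i+1)!}\right)$, with $1/k!:=0$ for negative integers $k$; $(a)_k:=a(a+1)\cdots(a+k-1)$, $(a)_0:=1$. $P_4(x,y;n)$ denotes the (unique) polynomial in $x,y$ such that for all nonnegative integers $x,y$ with $x+y\ge1$: $E(x,y;n)=\prod_{i=0}^{n-1}\frac{(x+y+i-1)!\,(2x+y+2i+1)_i\,(x+2y+2i+1)_i}{(x+2i+1)!\,(y+2i+1)!}\cdot P_4(x,y;n)$ (such a polynomial exists). *)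

theory Defs
  imports Main "Jordan_Normal_Form.Determinant"
begin

definition inv_fact :: "int \<Rightarrow> real" where
  "inv_fact k = (if k < 0 then 0 else 1 / fact (nat k))"

text \<open>Matrix entry (i,j) of the determinant E(x,y;n), for nonnegative integers x,y with x+y \<ge> 1
  (so that (x+y+i+j-1)! is a factorial of a nonnegative integer).\<close>
definition E_entry :: "nat \<Rightarrow> nat \<Rightarrow> nat \<Rightarrow> nat \<Rightarrow> real" where
  "E_entry x y i j =
     fact (nat (int x + int y + int i + int j - 1))
     * (real_of_int (int y - int x + 3 * int j - 3 * int i))
     * inv_fact (int x + 2 * int i - int j + 1)
     * inv_fact (int y + 2 * int j - int i + 1)"

definition E :: "nat \<Rightarrow> nat \<Rightarrow> nat \<Rightarrow> real" where
  "E x y n = det (mat n n (\<lambda>(i, j). E_entry x y i j))"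

definition E_prefactor :: "nat \<Rightarrow> nat \<Rightarrow> nat \<Rightarrow> real" where
  "E_prefactor x y n =
     (\<Prod>i<n. fact (x + y + i - 1)
              * pochhammer (real (2 * x + y + 2 * i + 1)) i
              * pochhammer (real (x + 2 * y + 2 * i + 1)) i
              / (fact (x + 2 * i + 1) * fact (y + 2 * i + 1)))"

definition bivariate_polynomial :: "(real \<Rightarrow> real \<Rightarrow> real) \<Rightarrow> bool" where
  "bivariate_polynomial f \<longleftrightarrow>
     (\<exists>N c. \<forall>x y. f x y = (\<Sum>i\<le>N. \<Sum>j\<le>N. c i j * x ^ i * y ^ j))"

end

theory Submission
  imports Defs "HOL-Analysis.Weierstrass_Theorems" "HOL-Computational_Algebra.Polynomial"
begin

(*
  Removing the factorial factors of row i and column j from the matrix of E leaves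
  E_poly, the determinant of a matrix whose entries are polynomials in x and y, and
  the same factors relate E_prefactor to a polynomial prefactor_poly.  Hence
  E_poly = prefactor_poly * P4 on the positive integer grid, and so everywhere.

  Now restrict to the line t -> (t - u, -v - t) through (-u, -v).  Everything in
  sight is a product of linear functions of t, and prefactor_poly vanishes at t = 0
  to some exact order N.  In the Leibniz expansion of E_poly, a permutation p with
  p i > u + v - i for some i <= u + v contributes nothing, since the entry (i, p i)
  contains the factor (i - u - v)_(p i) = 0.  Injectivity forces every other p to
  map i to u + v - i for all i <= u + v, and counting the linear factors of these
  antidiagonal entries that vanish at t = 0 gives exactly N + 1.  So
  prefactor_poly * P4 vanishes to order N + 1 on the line, and P4 (-u, -v) = 0.
*)

(* HOL-Analysis also has a constant mat, which would shadow the matrices of E. *)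
hide_const (open) Finite_Cartesian_Product.mat

lemma card_Collect_less_add_eq:
  fixes b c m :: nat
  shows "card {k. k < m \<and> b + k = c} = of_bool (b \<le> c \<and> c < b + m)"
proof (cases "b \<le> c \<and> c < b + m")
  case True
  then have "{k. k < m \<and> b + k = c} = {c - b}"
    by auto
  then show ?thesis
    using True by simp
next
  case False
  then have "{k. k < m \<and> b + k = c} = {}"
    by auto
  then show ?thesis
    unfolding \<open>{k. k < m \<and> b + k = c} = {}\<close> using False by simp
qed

lemma sum_of_bool_eq_interval:
  fixes lo hi :: nat
  assumes "finite A" and "\<And>i. i \<in> A \<and> P i \<longleftrightarrow> lo \<le> i \<and> i < hi" and "lo \<le> hi"
  shows "lo + (\<Sum>i\<in>A. of_bool (P i)) = hi"
proof -
  have "A \<inter> {i. P i} = {lo..<hi}"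
    by (simp add: set_eq_iff assms(2))
  then show ?thesis
    using assms(1,3) by simp
qed

lemma div_le_iff_less_Suc_mult:
  fixes c k i :: nat
  assumes "k > 0"
  shows "c div k \<le> i \<longleftrightarrow> c < Suc i * k"
  using div_less_iff_less_mult[OF assms, of c "Suc i"] by (simp only: less_Suc_eq_le)

lemma less_div_iff_Suc_mult_le:
  fixes c k i :: nat
  assumes "k > 0"
  shows "i < c div k \<longleftrightarrow> Suc i * k \<le> c"
  using less_eq_div_iff_mult_less_eq[OF assms, of "Suc i" c] by (simp only: Suc_le_eq)

lemma inj_on_below_antidiagonal_eq:
  fixes p :: "nat \<Rightarrow> nat"
  assumes "inj_on p {..w}" and below: "\<And>i. i \<le> w \<Longrightarrow> p i \<le> w - i" and "i \<le> w"
  shows "p i = w - i"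
proof (rule ccontr)
  assume "p i \<noteq> w - i"
  with below \<open>i \<le> w\<close> have "(\<Sum>i\<le>w. p i) < (\<Sum>i\<le>w. w - i)"
    by (intro sum_strict_mono_ex1) (auto intro: le_neq_implies_less)
  moreover have "p ` {..w} \<subseteq> {..w}"
    using below by (meson atMost_iff diff_le_self image_subsetI le_trans)
  then have "p ` {..w} = {..w}"
    using assms(1) by (intro card_subset_eq) (auto simp: card_image)
  then have "(\<Sum>i\<le>w. p i) = (\<Sum>i\<le>w. i)"
    using sum.reindex[OF assms(1), of id] by simp
  moreover have "(\<Sum>i\<le>w. w - i) = (\<Sum>i\<le>w. i)"
    using sum.atLeastAtMost_rev[of id 0 w] by (simp add: atMost_atLeast0)
  ultimately show False
    by simp
qed

lemma fact_add_eq_fact_mult_pochhammer: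
  "(fact (m + j) :: 'a :: {comm_semiring_1, semiring_char_0}) = fact m * pochhammer (of_nat m + 1) j"
  using pochhammer_product'[of 1 m j] by (simp add: pochhammer_fact add.commute)

lemma inv_fact_diff_eq:
  "inv_fact (int a - int j) = pochhammer (real a - real j + 1) j / fact a"
proof (cases "j \<le> a")
  case True
  have "(fact a :: real) = fact (a - j) * pochhammer (real a - real j + 1) j"
    using fact_add_eq_fact_mult_pochhammer[of "a - j" j, where 'a = real] True by (simp add: of_nat_diff)
  moreover have "pochhammer (real a - real j + 1) j > 0"
    using True by (intro pochhammer_pos) simp
  ultimately show ?thesis
    using True by (simp add: inv_fact_def nat_diff_distrib)
next
  case False
  then have "pochhammer (real a - real j + 1) j = 0"
    unfolding pochhammer_eq_0_iff by (intro exI[of _ "j - a - 1"]) (simp add: of_nat_diff)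
  then show ?thesis
    using False by (simp add: inv_fact_def)
qed

lemma det_mat_Leibniz:
  "det (mat n n f) = (\<Sum>p | p permutes {..<n}. signof p * (\<Prod>i<n. f (i, p i)))"
  unfolding det_def by (auto simp: atLeast0LessThan permutes_in_image intro!: sum.cong prod.cong)

lemma det_mat_scale_rows_cols:
  "det (mat n n (\<lambda>(i, j). r i * c j * f i j)) =
    (\<Prod>i<n. r i) * (\<Prod>j<n. c j) * det (mat n n (\<lambda>(i, j). f i j))"
proof -
  have "(\<Prod>i<n. r i * c (p i) * f i (p i)) = (\<Prod>i<n. r i) * (\<Prod>j<n. c j) * (\<Prod>i<n. f i (p i))"
    if "p permutes {..<n}" for p
    using prod.permute[OF that, of c] by (simp add: prod.distrib comp_def)
  then show ?thesis
    unfolding det_mat_Leibniz by (simp add: sum_distrib_left mult_ac)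
qed

section \<open>Polynomial functions\<close>

lemma real_polynomial_function_id: "real_polynomial_function (\<lambda>x. x)"
  by (simp add: real_polynomial_function_eq)

lemma real_polynomial_function_pochhammer:
  "real_polynomial_function f \<Longrightarrow> real_polynomial_function (\<lambda>x. pochhammer (f x) m)"
  unfolding pochhammer_prod by (intro real_polynomial_function_prod) auto

lemma real_polynomial_function_imp_poly:
  fixes f :: "real \<Rightarrow> real"
  assumes "real_polynomial_function f"
  obtains p where "f = poly p"
proof -
  obtain a N where "f = (\<lambda>x. \<Sum>i\<le>N. a i * x ^ i)"
    using assms real_polynomial_function_iff_sum by blast
  then have "f = poly (\<Sum>i\<le>N. monom (a i) i)"
    by (simp add: fun_eq_iff poly_sum poly_monom)
  then show thesis by (rule that)
qed

lemma real_polynomial_function_eq_0: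
  fixes f :: "real \<Rightarrow> real"
  assumes "real_polynomial_function f" and "infinite {x. f x = 0}"
  shows "f x = 0"
proof -
  obtain p where p: "f = poly p"
    using assms(1) by (rule real_polynomial_function_imp_poly)
  then have "p = 0"
    using assms(2) poly_roots_finite by blast
  then show ?thesis by (simp add: p)
qed

lemma bivariate_polynomial_compose:
  assumes "bivariate_polynomial P"
    and "real_polynomial_function f" and "real_polynomial_function g"
  shows "real_polynomial_function (\<lambda>t. P (f t) (g t))"
proof -
  obtain N c where "P = (\<lambda>x y. \<Sum>i\<le>N. \<Sum>j\<le>N. c i j * x ^ i * y ^ j)"
    using assms(1) unfolding bivariate_polynomial_def by blast
  then show ?thesis
    by (simp only:) (intro real_polynomial_function_sum real_polynomial_function.intros(4)
        real_polynomial_function_power real_polynomial_function.intros(2) assms(2,3) finite_atMost)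
qed

lemma polynomial_eq_0_on_positive_grid:
  fixes F :: "real \<Rightarrow> real \<Rightarrow> real"
  assumes "\<And>y. real_polynomial_function (\<lambda>x. F x y)"
    and "\<And>x. real_polynomial_function (\<lambda>y. F x y)"
    and "\<And>m n :: nat. m \<ge> 1 \<Longrightarrow> n \<ge> 1 \<Longrightarrow> F (real m) (real n) = 0"
  shows "F x y = 0"
proof -
  have positive_integers: "infinite (real ` {1..})"
    by (simp add: finite_image_iff infinite_Ici)
  have "F x (real n) = 0" if "n \<ge> 1" for n
  proof (rule real_polynomial_function_eq_0[OF assms(1)])
    have "real ` {1..} \<subseteq> {x. F x (real n) = 0}"
      using that assms(3) by auto
    then show "infinite {x. F x (real n) = 0}"
      using positive_integers by (rule infinite_super)
  qed
  then have "real ` {1..} \<subseteq> {y. F x y = 0}"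
    by auto
  then have "infinite {y. F x y = 0}"
    using positive_integers by (rule infinite_super)
  then show ?thesis
    by (rule real_polynomial_function_eq_0[OF assms(2)])
qed

section \<open>Order of vanishing at 0\<close>

definition vanishes_to_order :: "nat \<Rightarrow> (real \<Rightarrow> real) \<Rightarrow> bool" where
  "vanishes_to_order k f \<longleftrightarrow> (\<exists>q. \<forall>t. f t = t ^ k * poly q t)"

definition vanishes_to_exact_order :: "nat \<Rightarrow> (real \<Rightarrow> real) \<Rightarrow> bool" where
  "vanishes_to_exact_order k f \<longleftrightarrow> (\<exists>q. (\<forall>t. f t = t ^ k * poly q t) \<and> poly q 0 \<noteq> 0)"

lemma vanishes_to_exact_order_imp_order:
  "vanishes_to_exact_order k f \<Longrightarrow> vanishes_to_order k f"
  unfolding vanishes_to_order_def vanishes_to_exact_order_def by blast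

lemma vanishes_to_order_zero: "vanishes_to_order k (\<lambda>t. 0)"
  unfolding vanishes_to_order_def by (intro exI[of _ 0]) simp

lemma real_polynomial_function_vanishes_to_order_0:
  "real_polynomial_function f \<Longrightarrow> vanishes_to_order 0 f"
  unfolding vanishes_to_order_def by (metis real_polynomial_function_imp_poly power_0 mult_1)

lemma vanishes_to_order_mult:
  assumes "vanishes_to_order a f" and "vanishes_to_order b g"
  shows "vanishes_to_order (a + b) (\<lambda>t. f t * g t)"
proof -
  obtain p q where "\<And>t. f t = t ^ a * poly p t" and "\<And>t. g t = t ^ b * poly q t"
    using assms unfolding vanishes_to_order_def by blast
  then have "\<And>t. f t * g t = t ^ (a + b) * poly (p * q) t"
    by (simp add: power_add)
  then show ?thesis unfolding vanishes_to_order_def by blast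
qed

lemma vanishes_to_exact_order_mult:
  assumes "vanishes_to_exact_order a f" and "vanishes_to_exact_order b g"
  shows "vanishes_to_exact_order (a + b) (\<lambda>t. f t * g t)"
proof -
  obtain p q where "\<And>t. f t = t ^ a * poly p t" "poly p 0 \<noteq> 0"
    and "\<And>t. g t = t ^ b * poly q t" "poly q 0 \<noteq> 0"
    using assms unfolding vanishes_to_exact_order_def by blast
  then have "(\<forall>t. f t * g t = t ^ (a + b) * poly (p * q) t) \<and> poly (p * q) 0 \<noteq> 0"
    by (simp add: power_add)
  then show ?thesis unfolding vanishes_to_exact_order_def by blast
qed

lemma vanishes_to_order_prod:
  "(\<And>i. i \<in> A \<Longrightarrow> vanishes_to_order (k i) (f i)) \<Longrightarrow>
    vanishes_to_order (\<Sum>i\<in>A. k i) (\<lambda>t. \<Prod>i\<in>A. f i t)"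
proof (induction A rule: infinite_finite_induct)
  case (insert a A)
  then show ?case by (simp add: vanishes_to_order_mult)
qed (auto simp: vanishes_to_order_def intro: exI[of _ 1])

lemma vanishes_to_exact_order_prod:
  "(\<And>i. i \<in> A \<Longrightarrow> vanishes_to_exact_order (k i) (f i)) \<Longrightarrow>
    vanishes_to_exact_order (\<Sum>i\<in>A. k i) (\<lambda>t. \<Prod>i\<in>A. f i t)"
proof (induction A rule: infinite_finite_induct)
  case (insert a A)
  then show ?case by (simp add: vanishes_to_exact_order_mult)
qed (auto simp: vanishes_to_exact_order_def intro: exI[of _ 1])

lemma vanishes_to_order_sum:
  "(\<And>i. i \<in> A \<Longrightarrow> vanishes_to_order k (f i)) \<Longrightarrow>
    vanishes_to_order k (\<lambda>t. \<Sum>i\<in>A. f i t)"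
proof (induction A rule: infinite_finite_induct)
  case (insert a A)
  then obtain p q where "\<And>t. f a t = t ^ k * poly p t" and "\<And>t. (\<Sum>i\<in>A. f i t) = t ^ k * poly q t"
    unfolding vanishes_to_order_def by blast
  then have "\<And>t. (\<Sum>i\<in>insert a A. f i t) = t ^ k * poly (p + q) t"
    using insert.hyps by (simp add: algebra_simps)
  then show ?case unfolding vanishes_to_order_def by blast
qed (simp_all add: vanishes_to_order_zero)

lemma vanishes_to_exact_order_linear:
  assumes "s \<noteq> 0" and "\<And>t. f t = s * t + real b - real c"
  shows "vanishes_to_exact_order (of_bool (b = c)) f"
proof (cases "b = c")
  case True
  then show ?thesis
    unfolding vanishes_to_exact_order_def using assms by (intro exI[of _ "[:s:]"]) simp
next
  case False
  then show ?thesis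
    unfolding vanishes_to_exact_order_def using assms(2)
    by (intro exI[of _ "[:real b - real c, s:]"]) simp
qed

lemma vanishes_to_exact_order_pochhammer:
  assumes "s \<noteq> 0" and "\<And>t. f t = s * t + real b - real c"
  shows "vanishes_to_exact_order (card {k. k < m \<and> b + k = c}) (\<lambda>t. pochhammer (f t) m)"
proof -
  have "vanishes_to_exact_order (\<Sum>k<m. of_bool (b + k = c)) (\<lambda>t. \<Prod>k<m. f t + real k)"
    using assms by (intro vanishes_to_exact_order_prod vanishes_to_exact_order_linear) auto
  moreover have "{..<m} \<inter> {k. b + k = c} = {k. k < m \<and> b + k = c}"
    by auto
  ultimately show ?thesis
    by (simp add: pochhammer_prod atLeast0LessThan)
qed

lemma vanishes_to_exact_order_not_Suc:
  assumes "vanishes_to_exact_order k f"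
  shows "\<not> vanishes_to_order (Suc k) f"
proof
  assume "vanishes_to_order (Suc k) f"
  then obtain r where r: "\<And>t. f t = t ^ Suc k * poly r t"
    unfolding vanishes_to_order_def by blast
  obtain q where q: "\<And>t. f t = t ^ k * poly q t" and "poly q 0 \<noteq> 0"
    using assms unfolding vanishes_to_exact_order_def by blast
  have "poly (monom 1 k * q) t = poly (monom 1 k * ([:0, 1:] * r)) t" for t
  proof -
    have "poly (monom 1 k * q) t = f t"
      by (simp add: poly_monom q)
    also have "\<dots> = poly (monom 1 k * ([:0, 1:] * r)) t"
      by (simp add: poly_monom r)
    finally show ?thesis .
  qed
  then have "poly (monom 1 k * q) = poly (monom 1 k * ([:0, 1:] * r))" ..
  then have "monom 1 k * q = monom 1 k * ([:0, 1:] * r)"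
    by (simp only: poly_eq_poly_eq_iff)
  then have "q = [:0, 1:] * r"
    by (metis mult_left_cancel monom_eq_0_iff one_neq_zero)
  with \<open>poly q 0 \<noteq> 0\<close> show False by simp
qed

lemma vanishes_at_0_if_order_exceeds:
  assumes "real_polynomial_function P"
    and "vanishes_to_exact_order k g"
    and "vanishes_to_order (Suc k) (\<lambda>t. g t * P t)"
  shows "P 0 = 0"
proof (rule ccontr)
  assume "P 0 \<noteq> 0"
  moreover obtain p where "P = poly p"
    using assms(1) by (rule real_polynomial_function_imp_poly)
  ultimately have "vanishes_to_exact_order 0 P"
    unfolding vanishes_to_exact_order_def by auto
  from vanishes_to_exact_order_mult[OF assms(2) this]
  have "vanishes_to_exact_order k (\<lambda>t. g t * P t)"
    by simp
  then show False
    using assms(3) vanishes_to_exact_order_not_Suc by blast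
qed

section \<open>The polynomial determinant\<close>

(*
  E_entry x y i j without the row factor (x + y + i - 1)! / (x + 2 i + 1)! and the column
  factor 1 / (y + 2 j + 1)!: here (x + y + i - 1 + j)! / (x + y + i - 1)! = (x + y + i)_j, and
  a! * inv_fact (a - j) = (a - j + 1)_j also for j > a, where both sides are 0.
*)
definition E_poly_entry :: "real \<Rightarrow> real \<Rightarrow> nat \<Rightarrow> nat \<Rightarrow> real" where
  "E_poly_entry x y i j =
     pochhammer (x + y + real i) j * pochhammer (x + 2 * real i + 2 - real j) j
     * pochhammer (y + 2 * real j + 2 - real i) i * (y - x + 3 * real j - 3 * real i)"

definition E_poly :: "real \<Rightarrow> real \<Rightarrow> nat \<Rightarrow> real" where
  "E_poly x y n = det (mat n n (\<lambda>(i, j). E_poly_entry x y i j))"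

definition prefactor_poly :: "real \<Rightarrow> real \<Rightarrow> nat \<Rightarrow> real" where
  "prefactor_poly x y n =
     (\<Prod>i<n. pochhammer (2 * x + y + 2 * real i + 1) i * pochhammer (x + 2 * y + 2 * real i + 1) i)"

lemma E_entry_eq_E_poly_entry:
  assumes "x + y \<ge> 1"
  shows "E_entry x y i j =
    fact (x + y + i - 1) / fact (x + 2 * i + 1) * (1 / fact (y + 2 * j + 1))
    * E_poly_entry (real x) (real y) i j"
proof -
  have "nat (int x + int y + int i + int j - 1) = (x + y + i - 1) + j"
    using assms by linarith
  then have "fact (nat (int x + int y + int i + int j - 1)) =
      (fact (x + y + i - 1) :: real) * pochhammer (real (x + y + i - 1) + 1) j"
    by (simp only: fact_add_eq_fact_mult_pochhammer)
  moreover have "real (x + y + i - 1) + 1 = real x + real y + real i"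
    using assms by (simp add: of_nat_diff)
  moreover have "inv_fact (int x + 2 * int i - int j + 1) =
      pochhammer (real x + 2 * real i + 2 - real j) j / fact (x + 2 * i + 1)"
    using inv_fact_diff_eq[of "x + 2 * i + 1" j] by (simp add: algebra_simps)
  moreover have "inv_fact (int y + 2 * int j - int i + 1) =
      pochhammer (real y + 2 * real j + 2 - real i) i / fact (y + 2 * j + 1)"
    using inv_fact_diff_eq[of "y + 2 * j + 1" i] by (simp add: algebra_simps)
  ultimately show ?thesis
    unfolding E_entry_def E_poly_entry_def by simp
qed

lemma E_eq_scaled_E_poly:
  assumes "x + y \<ge> 1"
  shows "E x y n = (\<Prod>i<n. fact (x + y + i - 1) / fact (x + 2 * i + 1)) * (\<Prod>j<n. 1 / fact (y + 2 * j + 1))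
    * E_poly (real x) (real y) n"
  unfolding E_def E_poly_def E_entry_eq_E_poly_entry[OF assms]
  by (rule det_mat_scale_rows_cols)

lemma E_prefactor_eq_scaled_prefactor_poly:
  "E_prefactor x y n = (\<Prod>i<n. fact (x + y + i - 1) / fact (x + 2 * i + 1)) * (\<Prod>j<n. 1 / fact (y + 2 * j + 1))
    * prefactor_poly (real x) (real y) n"
  unfolding E_prefactor_def prefactor_poly_def prod.distrib[symmetric]
  by (intro prod.cong) (simp_all add: field_simps)

lemma real_polynomial_function_E_poly_entry:
  assumes "real_polynomial_function f" and "real_polynomial_function g"
  shows "real_polynomial_function (\<lambda>t. E_poly_entry (f t) (g t) i j)"
  unfolding E_poly_entry_def using assms by (intro real_polynomial_function.intros(2-4)
      real_polynomial_function_pochhammer real_polynomial_function_diff)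

lemma real_polynomial_function_E_poly:
  assumes "real_polynomial_function f" and "real_polynomial_function g"
  shows "real_polynomial_function (\<lambda>t. E_poly (f t) (g t) n)"
  unfolding E_poly_def det_mat_Leibniz
  by (intro real_polynomial_function_sum real_polynomial_function_prod finite_permutations
      real_polynomial_function.intros(2,4)) (auto intro: real_polynomial_function_E_poly_entry[OF assms])

lemma real_polynomial_function_prefactor_poly:
  assumes "real_polynomial_function f" and "real_polynomial_function g"
  shows "real_polynomial_function (\<lambda>t. prefactor_poly (f t) (g t) n)"
  unfolding prefactor_poly_def using assms
  by (intro real_polynomial_function_prod real_polynomial_function.intros(2-4)
      real_polynomial_function_pochhammer) auto

lemma E_poly_eq_prefactor_poly_mult:
  assumes P: "bivariate_polynomial P"
    and E_eq: "\<forall>x y :: nat. x + y \<ge> 1 \<longrightarrow> E x y n = E_prefactor x y n * P (real x) (real y)"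
  shows "E_poly x y n = prefactor_poly x y n * P x y"
proof -
  let ?F = "\<lambda>x y. E_poly x y n - prefactor_poly x y n * P x y"
  have polynomial: "real_polynomial_function (\<lambda>t. ?F (f t) (g t))"
    if "real_polynomial_function f" "real_polynomial_function g" for f g
    using that by (intro real_polynomial_function_diff real_polynomial_function.intros(4)
        real_polynomial_function_E_poly real_polynomial_function_prefactor_poly
        bivariate_polynomial_compose[OF P])
  have "?F (real a) (real b) = 0" if "a \<ge> 1" "b \<ge> 1" for a b
  proof -
    let ?R = "(\<Prod>i<n. fact (a + b + i - 1) / fact (a + 2 * i + 1)) * (\<Prod>j<n. 1 / fact (b + 2 * j + 1)) :: real"
    have "?R * E_poly a b n = ?R * (prefactor_poly a b n * P a b)"
      using E_eq that E_eq_scaled_E_poly[of a b n] E_prefactor_eq_scaled_prefactor_poly[of a b n] by simp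
    moreover have "?R \<noteq> 0"
      by simp
    ultimately show ?thesis
      by simp
  qed
  then have "?F x y = 0"
    using polynomial[OF real_polynomial_function_id real_polynomial_function.intros(2)]
      polynomial[OF real_polynomial_function.intros(2) real_polynomial_function_id]
    by (rule polynomial_eq_0_on_positive_grid[rotated 2])
  then show ?thesis
    by simp
qed

section \<open>Restriction to the line through (-u, -v)\<close>

(*
  The number of linear factors of prefactor_poly, resp. of the entry (i, j) of E_poly, that
  vanish at (x, y) = (-u, -v) along the line (t - u, -v - t).
*)
definition prefactor_path_order :: "nat \<Rightarrow> nat \<Rightarrow> nat \<Rightarrow> nat" where
  "prefactor_path_order u v n =
     (\<Sum>i<n. card {k. k < i \<and> 2 * i + 1 + k = 2 * u + v} + card {k. k < i \<and> 2 * i + 1 + k = u + 2 * v})"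

definition entry_path_order :: "nat \<Rightarrow> nat \<Rightarrow> nat \<Rightarrow> nat \<Rightarrow> nat" where
  "entry_path_order u v i j =
     card {k. k < j \<and> 2 * i + 2 + k = u + j} + card {k. k < i \<and> 2 * j + 2 + k = v + i}
     + of_bool (u + 3 * j = v + 3 * i)"

lemma prefactor_poly_path_order:
  "vanishes_to_exact_order (prefactor_path_order u v n) (\<lambda>t. prefactor_poly (t - real u) (- real v - t) n)"
proof -
  have "vanishes_to_exact_order (card {k. k < i \<and> 2 * i + 1 + k = 2 * u + v})
      (\<lambda>t. pochhammer (2 * (t - real u) + (- real v - t) + 2 * real i + 1) i)" for i
    by (rule vanishes_to_exact_order_pochhammer[where s = 1]) auto
  moreover have "vanishes_to_exact_order (card {k. k < i \<and> 2 * i + 1 + k = u + 2 * v})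
      (\<lambda>t. pochhammer (t - real u + 2 * (- real v - t) + 2 * real i + 1) i)" for i
    by (rule vanishes_to_exact_order_pochhammer[where s = "-1"]) auto
  ultimately show ?thesis
    unfolding prefactor_poly_def prefactor_path_order_def
    by (intro vanishes_to_exact_order_prod vanishes_to_exact_order_mult)
qed

lemma E_poly_entry_path_order:
  "vanishes_to_order (entry_path_order u v i j) (\<lambda>t. E_poly_entry (t - real u) (- real v - t) i j)"
proof -
  have "vanishes_to_order 0 (\<lambda>t. pochhammer (t - real u + (- real v - t) + real i) j)"
    by (intro real_polynomial_function_vanishes_to_order_0 real_polynomial_function_pochhammer)
      (simp add: real_polynomial_function.intros(2))
  moreover have "vanishes_to_order (card {k. k < j \<and> 2 * i + 2 + k = u + j})
      (\<lambda>t. pochhammer (t - real u + 2 * real i + 2 - real j) j)"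
    by (intro vanishes_to_exact_order_imp_order vanishes_to_exact_order_pochhammer[where s = 1]) auto
  moreover have "vanishes_to_order (card {k. k < i \<and> 2 * j + 2 + k = v + i})
      (\<lambda>t. pochhammer (- real v - t + 2 * real j + 2 - real i) i)"
    by (intro vanishes_to_exact_order_imp_order vanishes_to_exact_order_pochhammer[where s = "-1"]) auto
  moreover have "vanishes_to_order (of_bool (u + 3 * j = v + 3 * i))
      (\<lambda>t. - real v - t - (t - real u) + 3 * real j - 3 * real i)"
    by (intro vanishes_to_exact_order_imp_order vanishes_to_exact_order_linear[where s = "-2"]) auto
  ultimately have "vanishes_to_order (0 + card {k. k < j \<and> 2 * i + 2 + k = u + j}
      + card {k. k < i \<and> 2 * j + 2 + k = v + i} + of_bool (u + 3 * j = v + 3 * i))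
      (\<lambda>t. E_poly_entry (t - real u) (- real v - t) i j)"
    unfolding E_poly_entry_def by (intro vanishes_to_order_mult)
  then show ?thesis
    by (simp add: entry_path_order_def)
qed

lemma E_poly_entry_path_eq_0:
  assumes "i \<le> u + v" and "u + v < i + j"
  shows "E_poly_entry (t - real u) (- real v - t) i j = 0"
proof -
  have "pochhammer (t - real u + (- real v - t) + real i) j = 0"
    unfolding pochhammer_eq_0_iff using assms by (intro exI[of _ "u + v - i"]) (simp add: of_nat_diff)
  then show ?thesis
    by (simp add: E_poly_entry_def)
qed

lemma Leibniz_term_path_order:
  assumes "u + v < n" and "p permutes {..<n}"
  shows "vanishes_to_order (\<Sum>i\<le>u + v. entry_path_order u v i (u + v - i))
    (\<lambda>t. \<Prod>i<n. E_poly_entry (t - real u) (- real v - t) i (p i))"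
proof (cases "\<exists>i\<le>u + v. u + v < i + p i")
  case True
  then obtain i where "i \<le> u + v" "u + v < i + p i"
    by blast
  then have vanishing: "(\<Prod>i<n. E_poly_entry (t - real u) (- real v - t) i (p i)) = 0" for t
    using assms(1) by (intro prod_zero bexI[of _ i] E_poly_entry_path_eq_0) auto
  show ?thesis
    by (simp add: vanishing vanishes_to_order_zero)
next
  case False
  let ?M = "\<lambda>t i j. E_poly_entry (t - real u) (- real v - t) i j"
  have "p i \<le> u + v - i" if "i \<le> u + v" for i
    using False that by auto
  then have antidiagonal: "p i = u + v - i" if "i \<le> u + v" for i
    using inj_on_below_antidiagonal_eq[OF permutes_inj_on[OF assms(2)]] that by blast
  have split: "{..<n} = {..u + v} \<union> {u + v<..<n}"
    using assms(1) by auto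
  have "(\<Prod>i<n. ?M t i (p i)) =
      (\<Prod>i\<le>u + v. ?M t i (u + v - i)) * (\<Prod>i\<in>{u + v<..<n}. ?M t i (p i))" for t
    unfolding split by (subst prod.union_disjoint) (auto simp: antidiagonal)
  moreover have "vanishes_to_order ((\<Sum>i\<le>u + v. entry_path_order u v i (u + v - i)) + 0)
      (\<lambda>t. (\<Prod>i\<le>u + v. ?M t i (u + v - i)) * (\<Prod>i\<in>{u + v<..<n}. ?M t i (p i)))"
    by (intro vanishes_to_order_mult vanishes_to_order_prod E_poly_entry_path_order
        real_polynomial_function_vanishes_to_order_0 real_polynomial_function_prod
        real_polynomial_function_E_poly_entry real_polynomial_function.intros(2)
        real_polynomial_function_diff real_polynomial_function_id) auto
  ultimately show ?thesis
    by simp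
qed

lemma E_poly_path_order:
  assumes "u + v < n"
  shows "vanishes_to_order (\<Sum>i\<le>u + v. entry_path_order u v i (u + v - i))
    (\<lambda>t. E_poly (t - real u) (- real v - t) n)"
proof -
  have "vanishes_to_order (0 + (\<Sum>i\<le>u + v. entry_path_order u v i (u + v - i)))
      (\<lambda>t. signof p * (\<Prod>i<n. E_poly_entry (t - real u) (- real v - t) i (p i)))"
    if "p permutes {..<n}" for p
    by (intro vanishes_to_order_mult Leibniz_term_path_order[OF assms that]
        real_polynomial_function_vanishes_to_order_0 real_polynomial_function.intros(2))
  then show ?thesis
    unfolding E_poly_def det_mat_Leibniz by (auto intro: vanishes_to_order_sum)
qed

(*
  Each of the five sums below counts the integers in an interval; the identity then comes
  down to a div 3 + (b + 2) div 3 = u + v, which holds because a + b = 3 (u + v).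
*)
lemma entry_path_orders_eq_Suc_prefactor_path_order:
  assumes "u + v < n"
  shows "(\<Sum>i\<le>u + v. entry_path_order u v i (u + v - i)) = Suc (prefactor_path_order u v n)"
proof -
  define a b where "a = 2 * u + v" and "b = u + 2 * v"
  define G1 G2 where
    "G1 = (\<Sum>i<n. of_bool (2 * i + 1 \<le> a \<and> a < 2 * i + 1 + i) :: nat)" and
    "G2 = (\<Sum>i<n. of_bool (2 * i + 1 \<le> b \<and> b < 2 * i + 1 + i) :: nat)"
  define A1 A2 A3 where
    "A1 = (\<Sum>i\<le>u + v. of_bool (2 * i + 2 \<le> u + (u + v - i) \<and> u + (u + v - i) < 2 * i + 2 + (u + v - i)) :: nat)" and
    "A2 = (\<Sum>i\<le>u + v. of_bool (2 * (u + v - i) + 2 \<le> v + i \<and> v + i < 2 * (u + v - i) + 2 + i) :: nat)" and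
    "A3 = (\<Sum>i\<le>u + v. of_bool (u + 3 * (u + v - i) = v + 3 * i) :: nat)"
  have div2: "2 * (c div 2) \<le> c" "c < 2 + 2 * (c div 2)"
    and div3: "3 * (c div 3) \<le> c" "c < 3 + 3 * (c div 3)" for c :: nat
    by (simp_all add: dividend_less_times_div)
  note linear_bounds = lessThan_iff atMost_iff div_le_iff_less_Suc_mult less_div_iff_Suc_mult_le
    zero_less_numeral mult_Suc
  have prefactor_order: "prefactor_path_order u v n = G1 + G2"
    unfolding prefactor_path_order_def card_Collect_less_add_eq sum.distrib G1_def G2_def a_def b_def ..
  have entry_orders: "(\<Sum>i\<le>u + v. entry_path_order u v i (u + v - i)) = A1 + A2 + A3"
    unfolding entry_path_order_def card_Collect_less_add_eq sum.distrib A1_def A2_def A3_def ..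
  have "(a + 2) div 3 + G1 = (a + 1) div 2"
    unfolding G1_def by (rule sum_of_bool_eq_interval[rotated 2], use div2 div3 in linarith, simp)
      (use assms in \<open>simp only: linear_bounds a_def; arith\<close>)
  moreover have "(b + 2) div 3 + G2 = (b + 1) div 2"
    unfolding G2_def by (rule sum_of_bool_eq_interval[rotated 2], use div2 div3 in linarith, simp)
      (use assms in \<open>simp only: linear_bounds b_def; arith\<close>)
  moreover have "u div 2 + A1 = (a + 1) div 3"
    unfolding A1_def by (rule sum_of_bool_eq_interval[rotated 2], use div2 div3 a_def in linarith, simp)
      (simp only: linear_bounds a_def; arith)
  moreover have "(a + 4) div 3 + A2 = (a + 3) div 2"
    unfolding A2_def by (rule sum_of_bool_eq_interval[rotated 2], use div2 div3 in linarith, simp)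
      (simp only: linear_bounds a_def; arith)
  moreover have "(a + 2) div 3 + A3 = a div 3 + 1"
    unfolding A3_def by (rule sum_of_bool_eq_interval[rotated 2], use div3 in linarith, simp)
      (simp only: linear_bounds a_def; arith)
  moreover have "(a + 3) div 2 = (a + 1) div 2 + 1" "(a + 4) div 3 = (a + 1) div 3 + 1"
    "(b + 1) div 2 = v + (u + 1) div 2" "u div 2 + (u + 1) div 2 = u"
    "a div 3 + (b + 2) div 3 = u + v"
    using div2 div3 a_def b_def by linarith+
  ultimately show ?thesis
    unfolding prefactor_order entry_orders by linarith
qed

theorem lemma7:
  fixes n u v :: nat and P4 :: "real \<Rightarrow> real \<Rightarrow> real"
  assumes "n \<ge> 1"
    and "bivariate_polynomial P4"
    and "\<forall>x y :: nat. x + y \<ge> 1 \<longrightarrow> E x y n = E_prefactor x y n * P4 (real x) (real y)"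
    and "u + v \<le> n - 1"
  shows "P4 (- real u) (- real v) = 0"
proof -
  have "u + v < n"
    using assms(1,4) by linarith
  have "E_poly x y n = prefactor_poly x y n * P4 x y" for x y
    using assms(2,3) by (rule E_poly_eq_prefactor_poly_mult)
  moreover have "vanishes_to_order (Suc (prefactor_path_order u v n))
      (\<lambda>t. E_poly (t - real u) (- real v - t) n)"
    using E_poly_path_order[OF \<open>u + v < n\<close>]
    unfolding entry_path_orders_eq_Suc_prefactor_path_order[OF \<open>u + v < n\<close>] .
  ultimately have order: "vanishes_to_order (Suc (prefactor_path_order u v n))
      (\<lambda>t. prefactor_poly (t - real u) (- real v - t) n * P4 (t - real u) (- real v - t))"
    by simp
  have "real_polynomial_function (\<lambda>t. P4 (t - real u) (- real v - t))"
    by (intro bivariate_polynomial_compose[OF assms(2)] real_polynomial_function_diff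
        real_polynomial_function_id real_polynomial_function.intros(2))
  from vanishes_at_0_if_order_exceeds[OF this prefactor_poly_path_order order]
  show ?thesis
    by simp
qed

end
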